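(* Let $G$ be a group with identity $\mathbf{1}$, $S\subseteq G$ inverse-closed, and $X=\mathrm{Cay}(G;S)$. Let $\mathcal{A}^0_{\mathbf{1}}(X)$ be the group of colour-preserving automorphisms of $X$ that fix the vertex $\mathbf{1}$, and let \[S^*=\{\, s\in S \mid \text{no nontrivial element of } \mathcal{A}^0_{\mathbf{1}}(X) \text{ fixes } s\,\}.\] If $S^*$ generates $G$, then $X$ is strongly CCA.
   Context: Graphs are simple (possibly infinite). For an inverse-closed subset $S$ of a group $G$, $\mathrm{Cay}(G;S)$ has vertex set $G$ and an edge from $g$ to $gs$ for each $g\in G$, $s\in S$; the edge $g$—$gs$ is coloured $\{s,s^{-1}\}$. A graph automorphism is colour-preserving if it maps every edge to an edge of the same colour, and colour-permuting if whenever two edges have the same colour their images also have the same colour. A map $\varphi\colon G\to G$ is affine if $\varphi(x)=\alpha(gx)$ for some $\alpha\in\mathrm{Aut}(G)$, $g\in G$. $\mathrm{Cay}(G;S)$ is strongly CCA if every colour-permuting automorphism of it is affine. *)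

theory Defs
  imports "HOL-Algebra.Algebra"
begin

text \<open>Cayley graph Cay(G;S): vertex set carrier G, x adjacent to y iff y = x s for some
  s in S (i.e. inv x y in S). Graphs are simple, so loops (x = y) are not edges.\<close>
definition cay_adj :: "('a, 'b) monoid_scheme \<Rightarrow> 'a set \<Rightarrow> 'a \<Rightarrow> 'a \<Rightarrow> bool" where
  "cay_adj G S x y \<longleftrightarrow> x \<in> carrier G \<and> y \<in> carrier G \<and> x \<noteq> y \<and> inv\<^bsub>G\<^esub> x \<otimes>\<^bsub>G\<^esub> y \<in> S"

text \<open>Colour of the edge x -- y = x s is {s, inv s}.\<close>
definition cay_colour :: "('a, 'b) monoid_scheme \<Rightarrow> 'a \<Rightarrow> 'a \<Rightarrow> 'a set" where
  "cay_colour G x y = {inv\<^bsub>G\<^esub> x \<otimes>\<^bsub>G\<^esub> y, inv\<^bsub>G\<^esub> y \<otimes>\<^bsub>G\<^esub> x}"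

definition cay_aut :: "('a, 'b) monoid_scheme \<Rightarrow> 'a set \<Rightarrow> ('a \<Rightarrow> 'a) \<Rightarrow> bool" where
  "cay_aut G S \<phi> \<longleftrightarrow> bij_betw \<phi> (carrier G) (carrier G) \<and>
     (\<forall>x\<in>carrier G. \<forall>y\<in>carrier G. cay_adj G S x y \<longleftrightarrow> cay_adj G S (\<phi> x) (\<phi> y))"

definition colour_preserving :: "('a, 'b) monoid_scheme \<Rightarrow> 'a set \<Rightarrow> ('a \<Rightarrow> 'a) \<Rightarrow> bool" where
  "colour_preserving G S \<phi> \<longleftrightarrow> cay_aut G S \<phi> \<and>
     (\<forall>x y. cay_adj G S x y \<longrightarrow> cay_colour G (\<phi> x) (\<phi> y) = cay_colour G x y)"

definition colour_permuting :: "('a, 'b) monoid_scheme \<Rightarrow> 'a set \<Rightarrow> ('a \<Rightarrow> 'a) \<Rightarrow> bool" where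
  "colour_permuting G S \<phi> \<longleftrightarrow> cay_aut G S \<phi> \<and>
     (\<forall>x y u v. cay_adj G S x y \<longrightarrow> cay_adj G S u v \<longrightarrow>
        cay_colour G x y = cay_colour G u v \<longrightarrow>
        cay_colour G (\<phi> x) (\<phi> y) = cay_colour G (\<phi> u) (\<phi> v))"

definition affine_map :: "('a, 'b) monoid_scheme \<Rightarrow> ('a \<Rightarrow> 'a) \<Rightarrow> bool" where
  "affine_map G \<phi> \<longleftrightarrow> (\<exists>\<alpha> \<in> iso G G. \<exists>g \<in> carrier G.
      \<forall>x \<in> carrier G. \<phi> x = \<alpha> (g \<otimes>\<^bsub>G\<^esub> x))"

definition strongly_CCA :: "('a, 'b) monoid_scheme \<Rightarrow> 'a set \<Rightarrow> bool" where
  "strongly_CCA G S \<longleftrightarrow> (\<forall>\<phi>. colour_permuting G S \<phi> \<longrightarrow> affine_map G \<phi>)"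

definition A0_one :: "('a, 'b) monoid_scheme \<Rightarrow> 'a set \<Rightarrow> ('a \<Rightarrow> 'a) set" where
  "A0_one G S = {\<phi>. colour_preserving G S \<phi> \<and> \<phi> \<one>\<^bsub>G\<^esub> = \<one>\<^bsub>G\<^esub>}"

text \<open>S^*: elements of S fixed by no nontrivial element of A^0_1(X)
  (nontrivial = not the identity on the vertex set).\<close>
definition S_star :: "('a, 'b) monoid_scheme \<Rightarrow> 'a set \<Rightarrow> 'a set" where
  "S_star G S = {s \<in> S. \<forall>\<phi> \<in> A0_one G S. \<phi> s = s \<longrightarrow> (\<forall>x \<in> carrier G. \<phi> x = x)}"

end

theory Submission
  imports Defs
begin

text \<open>Composing with a translation we may assume that the colour-permuting automorphism \<open>\<phi>\<close>
  fixes \<open>\<one>\<close>. For \<open>s \<in> S\<^sup>*\<close> the map \<open>\<theta> = L\<^bsub>\<phi>(s)\<^sup>-\<^sup>1\<^esub> \<circ> \<phi> \<circ> L\<^bsub>s\<^esub> \<circ> \<phi>\<^sup>-\<^sup>1\<close> is a colour-preserving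
  automorphism fixing \<open>\<one>\<close>, and \<open>\<theta> = id\<close> says exactly that \<open>\<phi>(s x) = \<phi>(s) \<phi>(x)\<close>. By the definition
  of \<open>S\<^sup>*\<close>, \<open>\<theta> = id\<close> as soon as \<open>\<theta>\<close> fixes \<open>s\<close>. Otherwise \<open>\<theta>\<close> moves \<open>s\<close>, and so does its conjugate
  \<open>\<phi> \<theta> \<phi>\<^sup>-\<^sup>1\<close>, again an element of \<open>A\<^sup>0\<^sub>1\<close>. An element of \<open>A\<^sup>0\<^sub>1\<close> moving \<open>s\<close> swaps \<open>s\<close> and \<open>s\<^sup>-\<^sup>1\<close>, so
  the composite of two such fixes \<open>s\<close> and is trivial: there is only one, hence \<open>\<theta>\<close> commutes
  with \<open>\<phi>\<close>. Evaluating \<open>\<theta> \<phi> = \<phi> \<theta>\<close> at \<open>s\<^sup>-\<^sup>1\<close> gives \<open>\<phi>(s)\<^sup>-\<^sup>1 = \<phi>(s)\<close>, while the edges \<open>\<one> - s\<close> and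
  \<open>\<one> - s\<^sup>-\<^sup>1\<close> of equal colour force \<open>\<phi>(s\<^sup>-\<^sup>1) = \<phi>(s)\<^sup>-\<^sup>1\<close>; this contradicts injectivity.
  So \<open>\<phi>\<close> is multiplicative on the left at every element of \<open>S\<^sup>*\<close>, hence at every element of
  the group they generate, i.e. \<open>\<phi>\<close> is a group automorphism.\<close>

definition left_hom_set :: "('a, 'b) monoid_scheme \<Rightarrow> ('a \<Rightarrow> 'a) \<Rightarrow> 'a set" where
  "left_hom_set G \<phi> = {g \<in> carrier G. \<forall>x \<in> carrier G. \<phi> (g \<otimes>\<^bsub>G\<^esub> x) = \<phi> g \<otimes>\<^bsub>G\<^esub> \<phi> x}"

context group begin

lemma inv_mult_left_cancel:
  "g \<in> carrier G \<Longrightarrow> x \<in> carrier G \<Longrightarrow> y \<in> carrier G \<Longrightarrow> inv (g \<otimes> x) \<otimes> (g \<otimes> y) = inv x \<otimes> y"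
  by (simp add: inv_mult_group m_assoc[symmetric]) (simp add: m_assoc)

lemma left_hom_set_subgroup:
  assumes \<phi>: "\<phi> \<in> carrier G \<rightarrow> carrier G" and one: "\<phi> \<one> = \<one>"
  shows "subgroup (left_hom_set G \<phi>) G"
proof -
  have \<phi>c: "\<And>x. x \<in> carrier G \<Longrightarrow> \<phi> x \<in> carrier G" using \<phi> by blast
  have inv_mem: "inv a \<in> left_hom_set G \<phi>" if a: "a \<in> left_hom_set G \<phi>" for a
  proof -
    have ac: "a \<in> carrier G" and ax: "\<And>x. x \<in> carrier G \<Longrightarrow> \<phi> (a \<otimes> x) = \<phi> a \<otimes> \<phi> x"
      using a unfolding left_hom_set_def by auto
    have inv_ax: "\<phi> (inv a \<otimes> x) = inv (\<phi> a) \<otimes> \<phi> x" if x: "x \<in> carrier G" for x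
    proof -
      have "\<phi> x = \<phi> a \<otimes> \<phi> (inv a \<otimes> x)"
        using ax[of "inv a \<otimes> x"] ac x by (simp add: m_assoc[symmetric])
      then show ?thesis using inv_solve_left \<phi>c ac x by simp
    qed
    moreover have "\<phi> (inv a) = inv (\<phi> a)" using inv_ax[of \<one>] one \<phi>c ac by simp
    ultimately show ?thesis using ac unfolding left_hom_set_def by simp
  qed
  have "\<one> \<in> left_hom_set G \<phi>" using \<phi>c one unfolding left_hom_set_def by simp
  moreover have "a \<otimes> b \<in> left_hom_set G \<phi>"
    if "a \<in> left_hom_set G \<phi>" "b \<in> left_hom_set G \<phi>" for a b
    using that \<phi>c unfolding left_hom_set_def by (simp add: m_assoc)
  ultimately show ?thesis
    by (intro subgroupI inv_mem) (auto simp: left_hom_set_def)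
qed

lemma cay_adj_carrier: "cay_adj G S x y \<Longrightarrow> x \<in> carrier G \<and> y \<in> carrier G"
  unfolding cay_adj_def by simp

lemma cay_adj_one: "S \<subseteq> carrier G \<Longrightarrow> s \<in> S \<Longrightarrow> s \<noteq> \<one> \<Longrightarrow> cay_adj G S \<one> s"
  unfolding cay_adj_def by auto

lemma cay_adj_left_mult:
  "g \<in> carrier G \<Longrightarrow> x \<in> carrier G \<Longrightarrow> y \<in> carrier G \<Longrightarrow>
    cay_adj G S (g \<otimes> x) (g \<otimes> y) \<longleftrightarrow> cay_adj G S x y"
  unfolding cay_adj_def by (simp add: inv_mult_left_cancel)

lemma cay_colour_left_mult:
  "g \<in> carrier G \<Longrightarrow> x \<in> carrier G \<Longrightarrow> y \<in> carrier G \<Longrightarrow>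
    cay_colour G (g \<otimes> x) (g \<otimes> y) = cay_colour G x y"
  unfolding cay_colour_def by (simp add: inv_mult_left_cancel)

lemma cay_colour_one_eq:
  assumes "u \<in> carrier G" "v \<in> carrier G" "cay_colour G \<one> u = cay_colour G \<one> v"
  shows "v = u \<or> v = inv u"
  using assms unfolding cay_colour_def by (auto simp: doubleton_eq_iff)

lemma cay_aut_carrier: "cay_aut G S \<phi> \<Longrightarrow> x \<in> carrier G \<Longrightarrow> \<phi> x \<in> carrier G"
  unfolding cay_aut_def by (meson bij_betw_apply)

lemma cay_aut_adj: "cay_aut G S \<phi> \<Longrightarrow> cay_adj G S x y \<Longrightarrow> cay_adj G S (\<phi> x) (\<phi> y)"
  unfolding cay_aut_def using cay_adj_carrier by blast

lemma cay_aut_inv_into_cancel: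
  assumes "cay_aut G S \<phi>" "x \<in> carrier G"
  shows "\<phi> (inv_into (carrier G) \<phi> x) = x" and "inv_into (carrier G) \<phi> (\<phi> x) = x"
proof -
  have "bij_betw \<phi> (carrier G) (carrier G)" using assms(1) unfolding cay_aut_def by blast
  then show "\<phi> (inv_into (carrier G) \<phi> x) = x" "inv_into (carrier G) \<phi> (\<phi> x) = x"
    using assms(2) by (simp_all add: bij_betw_inv_into_right bij_betw_inv_into_left)
qed

lemma cay_aut_eq_iff:
  "cay_aut G S \<phi> \<Longrightarrow> x \<in> carrier G \<Longrightarrow> y \<in> carrier G \<Longrightarrow> \<phi> x = \<phi> y \<longleftrightarrow> x = y"
  using cay_aut_inv_into_cancel(2) by metis

lemma colour_permuting_cay_aut: "colour_permuting G S \<phi> \<Longrightarrow> cay_aut G S \<phi>"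
  unfolding colour_permuting_def by blast

lemma A0_one_cay_aut: "\<rho> \<in> A0_one G S \<Longrightarrow> cay_aut G S \<rho>"
  unfolding A0_one_def colour_preserving_def by blast

lemma cay_aut_comp:
  assumes \<phi>: "cay_aut G S \<phi>" and \<psi>: "cay_aut G S \<psi>"
  shows "cay_aut G S (\<phi> \<circ> \<psi>)"
  unfolding cay_aut_def
proof (intro conjI ballI)
  show "bij_betw (\<phi> \<circ> \<psi>) (carrier G) (carrier G)"
    using \<phi> \<psi> bij_betw_trans unfolding cay_aut_def by blast
  fix x y assume x: "x \<in> carrier G" and y: "y \<in> carrier G"
  have "cay_adj G S x y = cay_adj G S (\<psi> x) (\<psi> y)" using \<psi> x y unfolding cay_aut_def by blast
  also have "\<dots> = cay_adj G S (\<phi> (\<psi> x)) (\<phi> (\<psi> y))"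
    using \<phi> cay_aut_carrier[OF \<psi>] x y unfolding cay_aut_def by blast
  finally show "cay_adj G S x y = cay_adj G S ((\<phi> \<circ> \<psi>) x) ((\<phi> \<circ> \<psi>) y)" by simp
qed

lemma cay_aut_inv_into:
  assumes \<phi>: "cay_aut G S \<phi>"
  shows "cay_aut G S (inv_into (carrier G) \<phi>)"
  unfolding cay_aut_def
proof (intro conjI ballI)
  show bij: "bij_betw (inv_into (carrier G) \<phi>) (carrier G) (carrier G)"
    using \<phi> bij_betw_inv_into unfolding cay_aut_def by blast
  fix x y assume x: "x \<in> carrier G" and y: "y \<in> carrier G"
  have "cay_adj G S (inv_into (carrier G) \<phi> x) (inv_into (carrier G) \<phi> y) = cay_adj G S x y"
    using \<phi> bij_betw_apply[OF bij] x y cay_aut_inv_into_cancel(1)[OF \<phi>] unfolding cay_aut_def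
    by metis
  then show "cay_adj G S x y = cay_adj G S (inv_into (carrier G) \<phi> x) (inv_into (carrier G) \<phi> y)"
    by simp
qed

lemma cay_aut_left_mult: "g \<in> carrier G \<Longrightarrow> cay_aut G S (\<lambda>x. g \<otimes> x)"
  unfolding cay_aut_def
proof (intro conjI ballI)
  assume g: "g \<in> carrier G"
  show "bij_betw (\<lambda>x. g \<otimes> x) (carrier G) (carrier G)"
    by (rule bij_betw_byWitness[where f'="\<lambda>x. inv g \<otimes> x"])
       (use g in \<open>auto simp: m_assoc[symmetric]\<close>)
  fix x y assume "x \<in> carrier G" "y \<in> carrier G"
  then show "cay_adj G S x y = cay_adj G S (g \<otimes> x) (g \<otimes> y)"
    using cay_adj_left_mult g by simp
qed

lemma colour_preserving_comp:
  assumes \<phi>: "colour_preserving G S \<phi>" and \<psi>: "colour_preserving G S \<psi>"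
  shows "colour_preserving G S (\<phi> \<circ> \<psi>)"
  using assms cay_aut_comp cay_aut_adj unfolding colour_preserving_def by (simp add: comp_def)

lemma colour_preserving_left_mult: "g \<in> carrier G \<Longrightarrow> colour_preserving G S (\<lambda>x. g \<otimes> x)"
  unfolding colour_preserving_def
  using cay_aut_left_mult cay_colour_left_mult cay_adj_carrier by blast

text \<open>A colour-permuting \<open>\<phi>\<close> maps edges of equal colour to edges of equal colour, but on an
  infinite graph \<open>\<phi>\<^sup>-\<^sup>1\<close> need not; this is why \<open>\<phi>\<close>, not \<open>\<phi>\<^sup>-\<^sup>1\<close>, is on the outside.\<close>
lemma colour_preserving_conj:
  assumes \<phi>: "colour_permuting G S \<phi>" and \<psi>: "colour_preserving G S \<psi>"
  shows "colour_preserving G S (\<phi> \<circ> \<psi> \<circ> inv_into (carrier G) \<phi>)"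
proof -
  let ?\<phi>' = "inv_into (carrier G) \<phi>"
  have aut\<phi>: "cay_aut G S \<phi>" and aut\<psi>: "cay_aut G S \<psi>"
    using \<phi> \<psi> unfolding colour_permuting_def colour_preserving_def by auto
  have aut\<phi>': "cay_aut G S ?\<phi>'" using cay_aut_inv_into[OF aut\<phi>] .
  have "cay_colour G (\<phi> (\<psi> (?\<phi>' u))) (\<phi> (\<psi> (?\<phi>' v))) = cay_colour G u v"
    if uv: "cay_adj G S u v" for u v
  proof -
    have ab: "cay_adj G S (?\<phi>' u) (?\<phi>' v)" using cay_aut_adj[OF aut\<phi>' uv] .
    have "cay_colour G (\<phi> (\<psi> (?\<phi>' u))) (\<phi> (\<psi> (?\<phi>' v))) = cay_colour G (\<phi> (?\<phi>' u)) (\<phi> (?\<phi>' v))"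
      using \<phi> \<psi> ab cay_aut_adj[OF aut\<psi> ab] unfolding colour_permuting_def colour_preserving_def
      by blast
    then show ?thesis using cay_adj_carrier[OF uv] cay_aut_inv_into_cancel(1)[OF aut\<phi>] by simp
  qed
  then show ?thesis
    using cay_aut_comp[OF cay_aut_comp[OF aut\<phi> aut\<psi>] aut\<phi>'] unfolding colour_preserving_def by simp
qed

lemma colour_permuting_left_mult:
  assumes \<phi>: "colour_permuting G S \<phi>" and g: "g \<in> carrier G"
  shows "colour_permuting G S (\<lambda>x. g \<otimes> \<phi> x)"
proof -
  have aut: "cay_aut G S \<phi>" using colour_permuting_cay_aut[OF \<phi>] .
  have "cay_aut G S ((\<lambda>x. g \<otimes> x) \<circ> \<phi>)" by (intro cay_aut_comp cay_aut_left_mult g aut)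
  moreover have "cay_colour G (g \<otimes> \<phi> x) (g \<otimes> \<phi> y) = cay_colour G (\<phi> x) (\<phi> y)"
    if "cay_adj G S x y" for x y
    using cay_colour_left_mult[OF g] cay_aut_carrier[OF aut] cay_adj_carrier[OF that] by simp
  ultimately show ?thesis using \<phi> unfolding colour_permuting_def comp_def by metis
qed

lemma colour_permuting_inv:
  assumes S: "S \<subseteq> carrier G" and \<phi>: "colour_permuting G S \<phi>" and one: "\<phi> \<one> = \<one>"
    and s: "s \<in> S" "inv s \<in> S" and ne: "inv s \<noteq> s"
  shows "\<phi> (inv s) = inv (\<phi> s)"
proof -
  have aut: "cay_aut G S \<phi>" using colour_permuting_cay_aut[OF \<phi>] .
  have sc: "s \<in> carrier G" using S s by blast
  have "s \<noteq> \<one>" "inv s \<noteq> \<one>" using ne sc by auto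
  then have "cay_adj G S \<one> s" "cay_adj G S \<one> (inv s)" using cay_adj_one S s by auto
  moreover have "cay_colour G \<one> s = cay_colour G \<one> (inv s)"
    using sc unfolding cay_colour_def by auto
  ultimately have "cay_colour G \<one> (\<phi> s) = cay_colour G \<one> (\<phi> (inv s))"
    using \<phi> one unfolding colour_permuting_def by metis
  then have "\<phi> (inv s) = \<phi> s \<or> \<phi> (inv s) = inv (\<phi> s)"
    using cay_colour_one_eq cay_aut_carrier[OF aut] sc by simp
  moreover have "\<phi> (inv s) \<noteq> \<phi> s" using ne sc cay_aut_eq_iff[OF aut] by simp
  ultimately show ?thesis by blast
qed

lemma A0_one_comp: "\<phi> \<in> A0_one G S \<Longrightarrow> \<psi> \<in> A0_one G S \<Longrightarrow> \<phi> \<circ> \<psi> \<in> A0_one G S"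
  unfolding A0_one_def using colour_preserving_comp by auto

lemma A0_one_swap:
  assumes S: "S \<subseteq> carrier G" "\<forall>s \<in> S. inv s \<in> S"
    and \<rho>: "\<rho> \<in> A0_one G S" and s: "s \<in> S" and moved: "\<rho> s \<noteq> s"
  shows "\<rho> s = inv s" and "\<rho> (inv s) = s"
proof -
  have cp: "colour_preserving G S \<rho>" and one: "\<rho> \<one> = \<one>" using \<rho> unfolding A0_one_def by auto
  have aut: "cay_aut G S \<rho>" using A0_one_cay_aut[OF \<rho>] .
  have image: "\<rho> t = t \<or> \<rho> t = inv t" if t: "t \<in> S" "t \<noteq> \<one>" for t
  proof -
    have "cay_colour G \<one> (\<rho> t) = cay_colour G \<one> t"
      using cp one cay_adj_one[OF S(1) t] unfolding colour_preserving_def by metis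
    then show ?thesis using cay_colour_one_eq cay_aut_carrier[OF aut] S(1) t by blast
  qed
  have sc: "s \<in> carrier G" using S s by blast
  have "s \<noteq> \<one>" using moved one by auto
  then show s_inv: "\<rho> s = inv s" using image s moved by blast
  have "inv s \<noteq> \<one>" "inv s \<in> S" using \<open>s \<noteq> \<one>\<close> sc S(2) s by auto
  moreover have "\<rho> (inv s) \<noteq> inv s"
    using s_inv moved sc cay_aut_eq_iff[OF aut, of "inv s" s] by auto
  ultimately show "\<rho> (inv s) = s" using image sc by fastforce
qed

lemma S_star_fixed_imp_id:
  "s \<in> S_star G S \<Longrightarrow> \<rho> \<in> A0_one G S \<Longrightarrow> \<rho> s = s \<Longrightarrow> x \<in> carrier G \<Longrightarrow> \<rho> x = x"
  unfolding S_star_def by blast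

lemma S_star_moving_unique:
  assumes S: "S \<subseteq> carrier G" "\<forall>s \<in> S. inv s \<in> S" and s: "s \<in> S_star G S"
    and \<theta>: "\<theta> \<in> A0_one G S" "\<theta> s \<noteq> s" and \<sigma>: "\<sigma> \<in> A0_one G S" "\<sigma> s \<noteq> s"
    and x: "x \<in> carrier G"
  shows "\<sigma> x = \<theta> x"
proof -
  have sS: "s \<in> S" using s unfolding S_star_def by blast
  note \<theta>_swap = A0_one_swap[OF S \<theta>(1) sS \<theta>(2)] and \<sigma>_swap = A0_one_swap[OF S \<sigma>(1) sS \<sigma>(2)]
  have "\<And>y. y \<in> carrier G \<Longrightarrow> \<theta> (\<theta> y) = y"
    using S_star_fixed_imp_id[OF s A0_one_comp[OF \<theta>(1) \<theta>(1)]] \<theta>_swap by simp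
  moreover have "\<And>y. y \<in> carrier G \<Longrightarrow> \<sigma> (\<theta> y) = y"
    using S_star_fixed_imp_id[OF s A0_one_comp[OF \<sigma>(1) \<theta>(1)]] \<theta>_swap \<sigma>_swap by simp
  moreover have "\<theta> x \<in> carrier G" using cay_aut_carrier[OF A0_one_cay_aut[OF \<theta>(1)] x] .
  ultimately show ?thesis using x by metis
qed

lemma A0_one_conj:
  assumes \<phi>: "colour_permuting G S \<phi>" and one: "\<phi> \<one> = \<one>" and \<theta>: "\<theta> \<in> A0_one G S"
  shows "\<phi> \<circ> \<theta> \<circ> inv_into (carrier G) \<phi> \<in> A0_one G S"
proof -
  have aut: "cay_aut G S \<phi>" using colour_permuting_cay_aut[OF \<phi>] .
  have "inv_into (carrier G) \<phi> \<one> = \<one>" using cay_aut_inv_into_cancel(2)[OF aut, of \<one>] one by simp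
  then show ?thesis
    using \<theta> colour_preserving_conj[OF \<phi>] one unfolding A0_one_def by simp
qed

lemma A0_one_fixes_S_star:
  assumes S: "S \<subseteq> carrier G" "\<forall>s \<in> S. inv s \<in> S"
    and \<phi>: "colour_permuting G S \<phi>" and one: "\<phi> \<one> = \<one>" and s: "s \<in> S_star G S"
    and \<theta>: "\<theta> \<in> A0_one G S" and \<theta>_inv: "\<theta> (\<phi> (inv s)) = inv (\<phi> s)"
  shows "\<theta> s = s"
proof (rule ccontr)
  assume moved: "\<theta> s \<noteq> s"
  have sS: "s \<in> S" and sc: "s \<in> carrier G" using s S unfolding S_star_def by auto
  have aut: "cay_aut G S \<phi>" using colour_permuting_cay_aut[OF \<phi>] .
  note \<theta>c = cay_aut_carrier[OF A0_one_cay_aut[OF \<theta>]] and \<phi>c = cay_aut_carrier[OF aut]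
  have swap: "\<theta> s = inv s" "\<theta> (inv s) = s" using A0_one_swap[OF S \<theta> sS moved] by auto
  define \<sigma> where "\<sigma> = \<phi> \<circ> \<theta> \<circ> inv_into (carrier G) \<phi>"
  have \<sigma>: "\<sigma> \<in> A0_one G S" unfolding \<sigma>_def using A0_one_conj[OF \<phi> one \<theta>] .
  have \<sigma>_\<phi>: "\<sigma> (\<phi> x) = \<phi> (\<theta> x)" if "x \<in> carrier G" for x
    unfolding \<sigma>_def using cay_aut_inv_into_cancel(2)[OF aut] that by simp
  have "\<sigma> s \<noteq> s"
  proof
    assume "\<sigma> s = s"
    then have "\<phi> (\<theta> s) = \<phi> s" using S_star_fixed_imp_id[OF s \<sigma>] \<sigma>_\<phi> \<phi>c sc by metis
    then have "\<theta> s = s" using cay_aut_eq_iff[OF aut] \<theta>c sc by simp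
    with moved show False ..
  qed
  then have "\<sigma> (\<phi> (inv s)) = \<theta> (\<phi> (inv s))"
    using S_star_moving_unique[OF S s \<theta> moved \<sigma>] \<phi>c sc by simp
  then have "\<phi> s = inv (\<phi> s)" using \<sigma>_\<phi> swap(2) \<theta>_inv sc by simp
  moreover have "inv s \<noteq> s" using swap moved by simp
  moreover have "\<phi> (inv s) = inv (\<phi> s)" using colour_permuting_inv S \<phi> one sS calculation(2) by blast
  ultimately have "\<phi> (inv s) = \<phi> s" "inv s \<noteq> s" by simp_all
  then show False using cay_aut_eq_iff[OF aut, of "inv s" s] sc by simp
qed

lemma colour_permuting_S_star_left_hom:
  assumes S: "S \<subseteq> carrier G" "\<forall>s \<in> S. inv s \<in> S"
    and \<phi>: "colour_permuting G S \<phi>" and one: "\<phi> \<one> = \<one>" and s: "s \<in> S_star G S"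
  shows "s \<in> left_hom_set G \<phi>"
proof -
  have sc: "s \<in> carrier G" using s S unfolding S_star_def by auto
  have aut: "cay_aut G S \<phi>" using colour_permuting_cay_aut[OF \<phi>] .
  note \<phi>c = cay_aut_carrier[OF aut]
  have \<phi>s: "inv (\<phi> s) \<in> carrier G" using \<phi>c sc by simp
  define \<theta> where "\<theta> = (\<lambda>u. inv (\<phi> s) \<otimes> u) \<circ> (\<phi> \<circ> (\<lambda>u. s \<otimes> u) \<circ> inv_into (carrier G) \<phi>)"
  have \<theta>_\<phi>: "\<theta> (\<phi> x) = inv (\<phi> s) \<otimes> \<phi> (s \<otimes> x)" if "x \<in> carrier G" for x
    unfolding \<theta>_def using cay_aut_inv_into_cancel(2)[OF aut] that by simp
  have "colour_preserving G S \<theta>"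
    unfolding \<theta>_def
    using colour_preserving_comp[OF colour_preserving_left_mult[OF \<phi>s]
        colour_preserving_conj[OF \<phi> colour_preserving_left_mult[OF sc]]] .
  moreover have "\<theta> \<one> = \<one>" using \<theta>_\<phi>[of \<one>] one \<phi>c sc by simp
  ultimately have \<theta>: "\<theta> \<in> A0_one G S" unfolding A0_one_def by blast
  have "\<theta> (\<phi> (inv s)) = inv (\<phi> s)" using \<theta>_\<phi>[of "inv s"] one \<phi>s sc by simp
  then have "\<theta> s = s" using A0_one_fixes_S_star[OF S \<phi> one s \<theta>] by blast
  have "\<phi> (s \<otimes> x) = \<phi> s \<otimes> \<phi> x" if x: "x \<in> carrier G" for x
  proof -
    have "inv (\<phi> s) \<otimes> \<phi> (s \<otimes> x) = \<phi> x"
      using S_star_fixed_imp_id[OF s \<theta> \<open>\<theta> s = s\<close>] \<theta>_\<phi> \<phi>c x by metis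
    then show ?thesis using inv_solve_left'[of "\<phi> x" "\<phi> s" "\<phi> (s \<otimes> x)"] \<phi>c sc x by simp
  qed
  then show ?thesis using sc unfolding left_hom_set_def by blast
qed

lemma colour_permuting_iso:
  assumes S: "S \<subseteq> carrier G" "\<forall>s \<in> S. inv s \<in> S" and gen: "generate G (S_star G S) = carrier G"
    and \<phi>: "colour_permuting G S \<phi>" and one: "\<phi> \<one> = \<one>"
  shows "\<phi> \<in> iso G G"
proof -
  have bij: "bij_betw \<phi> (carrier G) (carrier G)"
    using \<phi> unfolding colour_permuting_def cay_aut_def by blast
  then have \<phi>_Pi: "\<phi> \<in> carrier G \<rightarrow> carrier G" by (simp add: bij_betw_apply)
  have "S_star G S \<subseteq> left_hom_set G \<phi>"
    using colour_permuting_S_star_left_hom[OF S \<phi> one] by blast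
  then have "carrier G \<subseteq> left_hom_set G \<phi>"
    using generate_subgroup_incl[OF _ left_hom_set_subgroup[OF \<phi>_Pi one]] gen by metis
  then have "\<phi> \<in> hom G G" using \<phi>_Pi unfolding hom_def left_hom_set_def by blast
  then show ?thesis using bij unfolding iso_def by blast
qed

lemma affine_mapI:
  assumes \<alpha>: "\<alpha> \<in> iso G G" and c: "c \<in> carrier G" and \<phi>: "\<forall>x \<in> carrier G. \<phi> x = c \<otimes> \<alpha> x"
  shows "affine_map G \<phi>"
proof -
  have "\<alpha> ` carrier G = carrier G" using \<alpha> unfolding iso_def by (simp add: bij_betw_def)
  then have "c \<in> \<alpha> ` carrier G" using c by simp
  then obtain g where g: "g \<in> carrier G" "\<alpha> g = c" by blast
  have "\<phi> x = \<alpha> (g \<otimes> x)" if "x \<in> carrier G" for x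
    using \<phi> g that hom_mult[of \<alpha> G G g x] \<alpha> unfolding iso_def by simp
  then show ?thesis using \<alpha> g unfolding affine_map_def by blast
qed

end

theorem lemma4p4:
  fixes G (structure) and S :: "'a set"
  assumes "group G"
    and "S \<subseteq> carrier G"
    and "\<forall>s \<in> S. inv\<^bsub>G\<^esub> s \<in> S"
    and "generate G (S_star G S) = carrier G"
  shows "strongly_CCA G S"
  unfolding strongly_CCA_def
proof (intro allI impI)
  interpret group G by fact
  fix \<phi> assume \<phi>: "colour_permuting G S \<phi>"
  define c where "c = \<phi> \<one>"
  have aut: "cay_aut G S \<phi>" using colour_permuting_cay_aut[OF \<phi>] .
  have c: "c \<in> carrier G" unfolding c_def using cay_aut_carrier[OF aut] by simp
  have "(\<lambda>x. inv c \<otimes> \<phi> x) \<in> iso G G"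
    using colour_permuting_iso[OF assms(2-4) colour_permuting_left_mult[OF \<phi> inv_closed[OF c]]] c
    unfolding c_def by simp
  moreover have "\<forall>x \<in> carrier G. \<phi> x = c \<otimes> (inv c \<otimes> \<phi> x)"
    using c cay_aut_carrier[OF aut] by (simp add: m_assoc[symmetric])
  ultimately show "affine_map G \<phi>" using affine_mapI c by blast
qed

end
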